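(* Let $\Sigma^*$ be an $n\times n$ positive definite matrix whose conditional independence structure is a tree $T^*$, let $D^*$ be a diagonal matrix with nonnegative entries, and let $\Sigma^o=\Sigma^*+D^*$. Let $\lambda_{\min}$ be a real number that is at most the smallest eigenvalue of $\Sigma^*$, and suppose $D^*_{bb}<\lambda_{\min}$ for every node $b$ of $T^*$ that is the neighbor of a leaf of $T^*$. Then for every decomposition $\Sigma^o=\Sigma'+D'$ in which $\Sigma'$ is positive definite with smallest eigenvalue at least $\lambda_{\min}$ and conditional independence structure a tree $T'$, and $D'$ is diagonal with nonnegative entries, we have $T'=T^*$.
   Context: For an $n\times n$ positive definite matrix $\Sigma$ with inverse $\Omega$, its conditional independence structure is the graph on $\{1,\dots,n\}$ with an edge $\{i,j\}$ ($i\neq j$) iff $\Omega_{ij}\neq 0$. *)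

theory Defs
  imports "HOL-Analysis.Analysis"
begin

definition pos_def :: "real^'n^'n \<Rightarrow> bool" where
  "pos_def A \<longleftrightarrow> transpose A = A \<and> (\<forall>x. x \<noteq> 0 \<longrightarrow> x \<bullet> (A *v x) > 0)"

definition is_eigenvalue :: "real^'n^'n \<Rightarrow> real \<Rightarrow> bool" where
  "is_eigenvalue A \<mu> \<longleftrightarrow> (\<exists>x. x \<noteq> 0 \<and> A *v x = \<mu> *\<^sub>R x)"

definition min_eig_ge :: "real^'n^'n \<Rightarrow> real \<Rightarrow> bool" where
  "min_eig_ge A l \<longleftrightarrow> (\<forall>\<mu>. is_eigenvalue A \<mu> \<longrightarrow> l \<le> \<mu>)"

definition diag_nonneg :: "real^'n^'n \<Rightarrow> bool" where
  "diag_nonneg D \<longleftrightarrow> (\<forall>i j. i \<noteq> j \<longrightarrow> D$i$j = 0) \<and> (\<forall>i. 0 \<le> D$i$i)"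

definition ci_graph :: "real^'n^'n \<Rightarrow> 'n \<Rightarrow> 'n \<Rightarrow> bool" where
  "ci_graph S i j \<longleftrightarrow> i \<noteq> j \<and> matrix_inv S $ i $ j \<noteq> 0"

text \<open>Simple graphs on the vertex set UNIV :: 'n set, given by a symmetric irreflexive
  adjacency relation E.\<close>
definition graph_connected :: "('n \<Rightarrow> 'n \<Rightarrow> bool) \<Rightarrow> bool" where
  "graph_connected E \<longleftrightarrow> (\<forall>u v. (u, v) \<in> {(a, b). E a b}\<^sup>*)"

definition is_cycle :: "('n \<Rightarrow> 'n \<Rightarrow> bool) \<Rightarrow> 'n list \<Rightarrow> bool" where
  "is_cycle E vs \<longleftrightarrow> length vs \<ge> 3 \<and> distinct vs
     \<and> (\<forall>k. Suc k < length vs \<longrightarrow> E (vs ! k) (vs ! Suc k))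
     \<and> E (last vs) (hd vs)"

definition is_tree :: "('n \<Rightarrow> 'n \<Rightarrow> bool) \<Rightarrow> bool" where
  "is_tree E \<longleftrightarrow> (\<forall>u v. E u v \<longrightarrow> E v u) \<and> (\<forall>u. \<not> E u u)
     \<and> graph_connected E \<and> (\<nexists>vs. is_cycle E vs)"

definition is_leaf :: "('n \<Rightarrow> 'n \<Rightarrow> bool) \<Rightarrow> 'n \<Rightarrow> bool" where
  "is_leaf E v \<longleftrightarrow> card {u. E v u} = 1"

end

theory Submission
  imports Defs
begin

(* Write A for Sstar and B for S': both are positive definite with tree-shaped concentration
   graphs, and they agree off the diagonal. For such a matrix S the global Markov property
   (if k separates i from j then S_kk S_ij = S_ik S_kj) makes every entry nonzero and gives
   S_xk S_ky / S_xy <= S_kk, with equality when k separates x from y.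

   This controls the diagonal at every vertex k that separates two vertices in the tree of B.
   If k has two neighbours p, q in the tree of A, then A_kk = A_pk A_kq / A_pq =
   B_pk B_kq / B_pq <= B_kk. If k is a leaf of the tree of A with neighbour b, then
   B_kk A_bb <= A_kb^2, so the 2x2 Schur complement B_bb - B_kb^2 / B_kk, which is at least the
   smallest eigenvalue of B, is at most B_bb - A_bb = D*_bb - D'_bb, contradicting the leaf
   condition. Either way A_kk <= B_kk.

   Finally, if k splits an edge u-v of one tree in the other tree, evaluating the entries at u, v, k
   in both matrices shows that the splitting tree has the strictly smaller diagonal entry at k.
   For an edge of the tree of A this contradicts the bound at k. For an edge of the tree of B, the
   two-neighbour bound with A and B exchanged makes k a leaf of the tree of B, and the leaf
   inequality at k then makes the entry at its neighbour violate the bound there. *)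

section \<open>Separation in trees\<close>

definition avoiding :: "('a \<Rightarrow> 'a \<Rightarrow> bool) \<Rightarrow> 'a \<Rightarrow> 'a \<Rightarrow> 'a \<Rightarrow> bool" where
  "avoiding E k a b \<longleftrightarrow> E a b \<and> a \<noteq> k \<and> b \<noteq> k"

(* separates E k k y and separates E k x k hold as soon as the other vertex differs from k. *)
abbreviation separates :: "('a \<Rightarrow> 'a \<Rightarrow> bool) \<Rightarrow> 'a \<Rightarrow> 'a \<Rightarrow> 'a \<Rightarrow> bool" where
  "separates E k x y \<equiv> \<not> (avoiding E k)\<^sup>*\<^sup>* x y"

lemma tree_symp: "is_tree E \<Longrightarrow> symp E"
  unfolding is_tree_def by (auto intro: sympI)

lemma tree_irrefl: "is_tree E \<Longrightarrow> \<not> E u u"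
  unfolding is_tree_def by auto

lemma avoiding_rtranclp_sym:
  assumes "symp E" and "(avoiding E k)\<^sup>*\<^sup>* x y"
  shows "(avoiding E k)\<^sup>*\<^sup>* y x"
proof -
  have "symp (avoiding E k)"
    using assms(1) unfolding avoiding_def by (auto intro: sympI dest: sympD)
  then show ?thesis
    using assms(2) symp_rtranclp sympD by metis
qed

lemma avoiding_rtranclp_avoids: "(avoiding E k)\<^sup>*\<^sup>* x y \<Longrightarrow> x \<noteq> k \<Longrightarrow> y \<noteq> k"
  by (induction rule: rtranclp_induct) (auto simp: avoiding_def)

lemma rtranclp_last_edge_avoiding:
  assumes "E\<^sup>*\<^sup>* x k" and "x \<noteq> k"
  shows "\<exists>p. E p k \<and> (avoiding E k)\<^sup>*\<^sup>* x p"
  using assms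
proof (induction rule: converse_rtranclp_induct)
  case base
  then show ?case by simp
next
  case (step y z)
  show ?case
  proof (cases "z = k")
    case True
    then show ?thesis using step.hyps(1) by auto
  next
    case False
    with step.IH obtain p where "E p k" "(avoiding E k)\<^sup>*\<^sup>* z p" by blast
    moreover have "avoiding E k y z" using step False unfolding avoiding_def by simp
    ultimately show ?thesis by (meson converse_rtranclp_into_rtranclp)
  qed
qed

lemma rtranclp_distinct_path:
  assumes "r\<^sup>*\<^sup>* a b"
  shows "\<exists>xs. xs \<noteq> [] \<and> hd xs = a \<and> last xs = b \<and> distinct xs \<and> successively r xs"
  using assms
proof (induction rule: rtranclp_induct)
  case base
  show ?case by (intro exI[of _ "[a]"]) auto
next
  case (step b c)
  then obtain xs where xs: "xs \<noteq> []" "hd xs = a" "last xs = b" "distinct xs" "successively r xs"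
    by blast
  show ?case
  proof (cases "c \<in> set xs")
    case True
    then obtain ys zs where xs_split: "xs = ys @ c # zs" by (meson split_list)
    have "successively r (ys @ [c])"
      using xs(5) unfolding xs_split by (auto simp: successively_append_iff)
    moreover have "hd (ys @ [c]) = a" using xs(2) xs_split by (cases ys) auto
    ultimately show ?thesis using xs(4) xs_split by (intro exI[of _ "ys @ [c]"]) auto
  next
    case False
    have "successively r (xs @ [c])"
      using xs step.hyps(2) by (auto simp: successively_append_iff)
    then show ?thesis using xs False by (intro exI[of _ "xs @ [c]"]) auto
  qed
qed

lemma successively_avoiding_notin:
  "successively (avoiding E k) xs \<Longrightarrow> hd xs \<noteq> k \<Longrightarrow> k \<notin> set xs"
  by (induction xs rule: induct_list012) (auto simp: avoiding_def)

lemma tree_neighbours_separated: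
  assumes tree: "is_tree E" and "E k p" "E k q" "p \<noteq> q"
  shows "separates E k p q"
proof
  assume "(avoiding E k)\<^sup>*\<^sup>* p q"
  then obtain xs where xs: "xs \<noteq> []" "hd xs = p" "last xs = q" "distinct xs"
      "successively (avoiding E k) xs"
    using rtranclp_distinct_path by metis
  have "p \<noteq> k" using \<open>E k p\<close> tree_irrefl[OF tree] by auto
  then have "k \<notin> set xs" using successively_avoiding_notin[OF xs(5)] xs(2) by simp
  have "length xs \<noteq> 1" using xs(1-3) \<open>p \<noteq> q\<close> by (cases xs) auto
  with xs(1) have "3 \<le> length (k # xs)" by (cases xs) (auto simp: Suc_le_eq)
  moreover have "E ((k # xs) ! i) ((k # xs) ! Suc i)" if "Suc i < length (k # xs)" for i
  proof (cases i)
    case 0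
    then show ?thesis using xs(1,2) \<open>E k p\<close> by (simp add: hd_conv_nth)
  next
    case (Suc m)
    then show ?thesis
      using successively_nth[OF xs(5)] that by (simp add: avoiding_def)
  qed
  moreover have "E (last (k # xs)) (hd (k # xs))"
    using xs(1,3) \<open>E k q\<close> tree_symp[OF tree] by (simp add: sympD)
  ultimately have "is_cycle E (k # xs)"
    using \<open>k \<notin> set xs\<close> xs(4) unfolding is_cycle_def by simp
  then show False using tree unfolding is_tree_def by blast
qed

lemma tree_neighbour_separates:
  assumes tree: "is_tree E" and "E k p" and p_y: "(avoiding E k)\<^sup>*\<^sup>* p y" and "y \<noteq> k"
  shows "separates E p k y"
proof
  assume k_y: "(avoiding E p)\<^sup>*\<^sup>* k y"
  have "k \<noteq> p" using \<open>E k p\<close> tree_irrefl[OF tree] by auto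
  then have "y \<noteq> p" using avoiding_rtranclp_avoids[OF k_y] by blast
  have "(avoiding E k)\<^sup>*\<^sup>* y p" using avoiding_rtranclp_sym[OF tree_symp[OF tree] p_y] .
  then obtain w where "avoiding E k w p" and y_w: "(avoiding (avoiding E k) p)\<^sup>*\<^sup>* y w"
    using rtranclp_last_edge_avoiding \<open>y \<noteq> p\<close> by metis
  have "(avoiding E p)\<^sup>*\<^sup>* y w"
    using y_w by (rule mono_rtranclp[rule_format, rotated]) (simp add: avoiding_def)
  with k_y have "(avoiding E p)\<^sup>*\<^sup>* k w" by (rule rtranclp_trans)
  moreover have "E p w" "w \<noteq> k"
    using \<open>avoiding E k w p\<close> tree_symp[OF tree] unfolding avoiding_def by (auto dest: sympD)
  ultimately show False
    using tree_neighbours_separated[OF tree] \<open>E k p\<close> tree_symp[OF tree] by (metis sympD)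
qed

lemma tree_edge_separates:
  assumes tree: "is_tree E" and "E u v" "k \<noteq> u" "k \<noteq> v"
  shows "separates E v u k \<or> separates E u v k"
proof (rule disjCI)
  assume "\<not> separates E u v k"
  moreover have "E v u" using \<open>E u v\<close> tree_symp[OF tree] by (simp add: sympD)
  ultimately show "separates E v u k"
    using tree_neighbour_separates[OF tree] \<open>k \<noteq> v\<close> by blast
qed

lemma tree_neighbour_towards:
  assumes tree: "is_tree E" and "x \<noteq> k"
  shows "\<exists>p. E k p \<and> (avoiding E k)\<^sup>*\<^sup>* p x"
proof -
  have "E\<^sup>*\<^sup>* x k"
    using tree unfolding is_tree_def graph_connected_def by (simp add: rtranclp_rtrancl_eq)
  then obtain p where "E p k" "(avoiding E k)\<^sup>*\<^sup>* x p"
    using rtranclp_last_edge_avoiding \<open>x \<noteq> k\<close> by metis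
  then show ?thesis
    using tree_symp[OF tree] avoiding_rtranclp_sym by (metis sympD)
qed

lemma tree_nonadjacent_separated:
  assumes tree: "is_tree E" and "u \<noteq> v" "\<not> E u v"
  shows "\<exists>k. k \<noteq> u \<and> k \<noteq> v \<and> separates E k u v"
proof -
  obtain p where "E v p" and p_u: "(avoiding E v)\<^sup>*\<^sup>* p u"
    using tree_neighbour_towards[OF tree \<open>u \<noteq> v\<close>] by blast
  have "p \<noteq> u" using \<open>E v p\<close> \<open>\<not> E u v\<close> tree_symp[OF tree] by (auto dest: sympD)
  moreover have "p \<noteq> v" using \<open>E v p\<close> tree_irrefl[OF tree] by auto
  moreover have "separates E p v u"
    using tree_neighbour_separates[OF tree \<open>E v p\<close> p_u] \<open>u \<noteq> v\<close> by simp
  then have "separates E p u v"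
    using avoiding_rtranclp_sym[OF tree_symp[OF tree]] by blast
  ultimately show ?thesis by blast
qed

lemma leaf_neighbour_separates:
  assumes "\<And>w. E l w \<Longrightarrow> w = b" and "y \<noteq> l"
  shows "separates E b l y"
proof
  assume "(avoiding E b)\<^sup>*\<^sup>* l y"
  then show False
    using assms by (cases rule: converse_rtranclpE) (auto simp: avoiding_def)
qed

lemma avoiding_component_psubset:
  assumes sep: "separates E p x k" and "(avoiding E k)\<^sup>*\<^sup>* x p" and "x \<noteq> p"
  shows "{u. (avoiding E p)\<^sup>*\<^sup>* x u} \<subset> {u. (avoiding E k)\<^sup>*\<^sup>* x u}"
proof -
  have "(avoiding E k)\<^sup>*\<^sup>* x u" if "(avoiding E p)\<^sup>*\<^sup>* x u" for u
    using that
  proof (induction rule: rtranclp_induct)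
    case (step w u)
    have "u \<noteq> k" using sep step.hyps by (metis rtranclp.rtrancl_into_rtrancl)
    moreover have "w \<noteq> k" using sep step.hyps(1) by blast
    ultimately show ?case
      using step unfolding avoiding_def by (simp add: rtranclp.rtrancl_into_rtrancl)
  qed simp
  moreover have "\<not> (avoiding E p)\<^sup>*\<^sup>* x p" using avoiding_rtranclp_avoids[of E p x p] \<open>x \<noteq> p\<close> by blast
  ultimately show ?thesis using \<open>(avoiding E k)\<^sup>*\<^sup>* x p\<close> by blast
qed

lemma tree_induct_towards [consumes 1, case_names root step]:
  fixes E :: "'a::finite \<Rightarrow> 'a \<Rightarrow> bool"
  assumes tree: "is_tree E"
    and root: "P x"
    and step: "\<And>k p. k \<noteq> x \<Longrightarrow> E k p \<Longrightarrow> (avoiding E k)\<^sup>*\<^sup>* p x \<Longrightarrow> P p \<Longrightarrow> P k"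
  shows "P k"
proof (induction "card {u. (avoiding E k)\<^sup>*\<^sup>* x u}" arbitrary: k rule: less_induct)
  case less
  show ?case
  proof (cases "k = x")
    case True
    then show ?thesis using root by simp
  next
    case False
    then obtain p where "E k p" and p_x: "(avoiding E k)\<^sup>*\<^sup>* p x"
      using tree_neighbour_towards[OF tree] by metis
    have "P p"
    proof (cases "p = x")
      case True
      then show ?thesis using root by simp
    next
      case False
      have "separates E p k x"
        using tree_neighbour_separates[OF tree \<open>E k p\<close> p_x] \<open>k \<noteq> x\<close> by simp
      then have "separates E p x k" using avoiding_rtranclp_sym[OF tree_symp[OF tree]] by blast
      moreover have "(avoiding E k)\<^sup>*\<^sup>* x p" using avoiding_rtranclp_sym[OF tree_symp[OF tree] p_x] .
      ultimately have "card {u. (avoiding E p)\<^sup>*\<^sup>* x u} < card {u. (avoiding E k)\<^sup>*\<^sup>* x u}"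
        using avoiding_component_psubset \<open>p \<noteq> x\<close> by (metis finite psubset_card_mono)
      then show ?thesis by (rule less.hyps)
    qed
    then show ?thesis using step False \<open>E k p\<close> p_x by blast
  qed
qed

section \<open>Positive definite matrices\<close>

lemma pos_def_sym: "pos_def S \<Longrightarrow> S$i$j = S$j$i"
  unfolding pos_def_def by (metis transpose_def vec_lambda_beta)

lemma quadratic_form_axis: "axis i 1 \<bullet> (A *v axis j 1) = A$i$j"
  by (simp add: matrix_vector_mult_basis inner_axis' column_def)

lemma pos_def_diag_pos:
  fixes S :: "real^'n^'n"
  assumes "pos_def S"
  shows "0 < S$i$i"
proof -
  have "axis i 1 \<noteq> (0::real^'n)" by (simp add: axis_eq_0_iff)
  then have "0 < axis i 1 \<bullet> (S *v axis i 1)" using assms unfolding pos_def_def by blast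
  then show ?thesis by (simp add: quadratic_form_axis)
qed

lemma schur_complement_form:
  fixes B :: "real^'n^'n"
  assumes pd: "pos_def B" and "j \<noteq> b"
  defines "x \<equiv> axis b 1 - (B$j$b / B$j$j) *\<^sub>R axis j 1"
  shows "x \<noteq> 0" and "1 \<le> x \<bullet> x" and "x \<bullet> (B *v x) = B$b$b - (B$j$b)^2 / B$j$j"
proof -
  define t where "t = B$j$b / B$j$j"
  have x_t: "x = axis b 1 - t *\<^sub>R axis j 1" unfolding x_def t_def ..
  show "1 \<le> x \<bullet> x"
    using \<open>j \<noteq> b\<close> unfolding x_t by (simp add: inner_diff_left inner_diff_right inner_axis_axis)
  then show "x \<noteq> 0" by auto
  have "x \<bullet> (B *v x) = B$b$b - t * B$b$j - t * B$j$b + t * t * B$j$j"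
    unfolding x_t
    by (simp add: matrix_vector_mult_diff_distrib matrix_vector_mult_scaleR inner_diff_left
        inner_diff_right quadratic_form_axis algebra_simps)
  also have "\<dots> = B$b$b - (B$j$b)^2 / B$j$j"
    using pos_def_sym[OF pd, of b j] pos_def_diag_pos[OF pd, of j] unfolding t_def
    by (simp add: field_simps power2_eq_square)
  finally show "x \<bullet> (B *v x) = B$b$b - (B$j$b)^2 / B$j$j" .
qed

lemma schur_complement_pos:
  fixes B :: "real^'n^'n"
  assumes "pos_def B" and "j \<noteq> b"
  shows "0 < B$b$b - (B$j$b)^2 / B$j$j"
  using schur_complement_form[OF assms] assms(1) unfolding pos_def_def by metis

lemma pos_def_off_diag_sq_less:
  fixes S :: "real^'n^'n"
  assumes pd: "pos_def S" and "j \<noteq> b"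
  shows "(S$j$b)^2 < S$j$j * S$b$b"
  using schur_complement_pos[OF assms] pos_def_diag_pos[OF pd, of j] by (simp add: field_simps)

lemma symmetric_form_commute:
  fixes A :: "real^'n^'n"
  assumes "transpose A = A"
  shows "x \<bullet> (A *v y) = y \<bullet> (A *v x)"
proof -
  have "x \<bullet> (A *v y) = (transpose A *v x) \<bullet> y"
    by (simp add: dot_lmul_matrix[symmetric])
  then show ?thesis using assms by (simp add: inner_commute)
qed

lemma nonneg_quadratic_linear_coeff_eq_0:
  fixes G D :: real
  assumes "\<And>t. 0 \<le> 2 * t * G + t^2 * D"
  shows "G = 0"
proof -
  define c where "c = \<bar>D\<bar> + 1"
  have "0 < c" and "D / c < 1" unfolding c_def by (simp_all add: field_simps)
  have "2 * (- G / c) * G + (- G / c)^2 * D = G^2 * (D / c - 2) / c"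
    using \<open>0 < c\<close> by (simp add: field_simps power2_eq_square)
  then have "0 \<le> G^2 * (D / c - 2)"
    using assms \<open>0 < c\<close> by (metis zero_le_divide_iff not_less)
  with \<open>D / c < 1\<close> have "G^2 \<le> 0" by (simp add: zero_le_mult_iff)
  then show "G = 0" by simp
qed

lemma psd_form_zero_imp_kernel:
  fixes M :: "real^'n^'n"
  assumes sym: "transpose M = M" and psd: "\<And>v. 0 \<le> v \<bullet> (M *v v)" and "x \<bullet> (M *v x) = 0"
  shows "M *v x = 0"
proof -
  define g where "g = M *v x"
  have "x \<bullet> (M *v g) = g \<bullet> g" "g \<bullet> (M *v x) = g \<bullet> g"
    using symmetric_form_commute[OF sym] unfolding g_def by simp_all
  then have "(x + t *\<^sub>R g) \<bullet> (M *v (x + t *\<^sub>R g)) = 2 * t * (g \<bullet> g) + t^2 * (g \<bullet> (M *v g))" for t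
    using \<open>x \<bullet> (M *v x) = 0\<close>
    by (simp add: matrix_vector_right_distrib matrix_vector_mult_scaleR inner_add_left
        inner_add_right power2_eq_square algebra_simps)
  then have "g \<bullet> g = 0"
    using psd by (metis nonneg_quadratic_linear_coeff_eq_0)
  then show ?thesis unfolding g_def by simp
qed

lemma quadratic_form_min_on_sphere:
  fixes A :: "real^'n^'n"
  obtains x0 where "x0 \<bullet> x0 = 1" and "\<And>v. (x0 \<bullet> (A *v x0)) * (v \<bullet> v) \<le> v \<bullet> (A *v v)"
proof -
  define f where "f v = v \<bullet> (A *v v)" for v :: "real^'n"
  have "continuous_on (sphere 0 1) f"
    unfolding f_def by (intro continuous_intros matrix_vector_mult_linear_continuous_on)
  moreover have "axis undefined 1 \<in> sphere (0::real^'n) 1" by (simp add: norm_axis_1)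
  ultimately obtain x0 where x0: "x0 \<in> sphere 0 1" "\<And>y. y \<in> sphere 0 1 \<Longrightarrow> f x0 \<le> f y"
    using continuous_attains_inf[OF compact_sphere] by (metis empty_iff)
  have "f x0 * (v \<bullet> v) \<le> f v" for v
  proof (cases "v = 0")
    case True
    then show ?thesis unfolding f_def by simp
  next
    case False
    then have "f x0 \<le> f (v /\<^sub>R norm v)" using x0(2) by simp
    also have "f (v /\<^sub>R norm v) = f v / (v \<bullet> v)"
      unfolding f_def by (simp add: matrix_vector_mult_scaleR power2_norm_eq_inner[symmetric]
          field_simps power2_eq_square)
    finally show ?thesis using False by (simp add: field_simps)
  qed
  moreover have "x0 \<bullet> x0 = 1" using x0(1) by (simp add: power2_norm_eq_inner[symmetric])
  ultimately show ?thesis using that unfolding f_def by blast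
qed

lemma min_eig_ge_quadratic_form:
  fixes A :: "real^'n^'n"
  assumes sym: "transpose A = A" and "min_eig_ge A l"
  shows "l * (x \<bullet> x) \<le> x \<bullet> (A *v x)"
proof -
  obtain x0 where x0: "x0 \<bullet> x0 = 1" and low: "\<And>v. (x0 \<bullet> (A *v x0)) * (v \<bullet> v) \<le> v \<bullet> (A *v v)"
    using quadratic_form_min_on_sphere[of A] by blast
  define \<mu> where "\<mu> = x0 \<bullet> (A *v x0)"
  define M where "M = A - \<mu> *\<^sub>R mat 1"
  have M_v: "M *v v = A *v v - \<mu> *\<^sub>R v" for v
    unfolding M_def by (simp add: matrix_vector_mult_diff_rdistrib scaleR_matrix_vector_assoc[symmetric])
  have "transpose M = M"
    using sym unfolding M_def by (simp add: vec_eq_iff transpose_def mat_def)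
  moreover have "0 \<le> v \<bullet> (M *v v)" for v
    using low[of v] unfolding M_v \<mu>_def by (simp add: inner_diff_right)
  moreover have "x0 \<bullet> (M *v x0) = 0"
    unfolding M_v \<mu>_def using x0 by (simp add: inner_diff_right)
  ultimately have "M *v x0 = 0" by (rule psd_form_zero_imp_kernel)
  then have "A *v x0 = \<mu> *\<^sub>R x0" unfolding M_v by simp
  moreover have "x0 \<noteq> 0" using x0 by auto
  ultimately have "l \<le> \<mu>"
    using \<open>min_eig_ge A l\<close> unfolding min_eig_ge_def is_eigenvalue_def by blast
  then have "l * (x \<bullet> x) \<le> \<mu> * (x \<bullet> x)" by (simp add: mult_right_mono)
  also have "\<dots> \<le> x \<bullet> (A *v x)" unfolding \<mu>_def by (rule low)
  finally show ?thesis .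
qed

lemma schur_complement_ge_min_eig:
  fixes B :: "real^'n^'n"
  assumes pd: "pos_def B" and "min_eig_ge B l" and "j \<noteq> b"
  shows "l \<le> B$b$b - (B$j$b)^2 / B$j$j"
proof (cases "l \<le> 0")
  case True
  then show ?thesis using schur_complement_pos[OF pd \<open>j \<noteq> b\<close>] by linarith
next
  case False
  define x :: "real^'n" where "x = axis b 1 - (B$j$b / B$j$j) *\<^sub>R axis j 1"
  have "l \<le> l * (x \<bullet> x)"
    using False schur_complement_form(2)[OF pd \<open>j \<noteq> b\<close>] unfolding x_def by simp
  also have "\<dots> \<le> x \<bullet> (B *v x)"
    using pd \<open>min_eig_ge B l\<close> min_eig_ge_quadratic_form unfolding pos_def_def by blast
  also have "\<dots> = B$b$b - (B$j$b)^2 / B$j$j"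
    unfolding x_def by (rule schur_complement_form(3)[OF pd \<open>j \<noteq> b\<close>])
  finally show ?thesis .
qed

lemma pos_def_matrix_inv:
  fixes S :: "real^'n^'n"
  assumes "pos_def S"
  shows "S ** matrix_inv S = mat 1" and "matrix_inv S ** S = mat 1"
proof -
  have "S *v x = 0 \<Longrightarrow> x = 0" for x
    using assms unfolding pos_def_def by force
  then have "invertible S"
    using matrix_left_invertible_ker invertible_left_inverse by blast
  then have "S ** matrix_inv S = mat 1 \<and> matrix_inv S ** S = mat 1"
    unfolding invertible_def matrix_inv_def by (rule someI_ex)
  then show "S ** matrix_inv S = mat 1" and "matrix_inv S ** S = mat 1" by simp_all
qed

lemma matrix_inv_mult_entry:
  fixes S :: "real^'n^'n"
  assumes "pos_def S"
  shows "(\<Sum>w\<in>UNIV. matrix_inv S $ u $ w * S $ w $ i) = (if u = i then 1 else 0)"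
proof -
  have "(matrix_inv S ** S) $ u $ i = mat 1 $ u $ i"
    using pos_def_matrix_inv(2)[OF assms] by simp
  then show ?thesis by (simp add: matrix_matrix_mult_def mat_def)
qed

lemma matrix_inv_form_pos:
  fixes S :: "real^'n^'n"
  assumes pd: "pos_def S" and "x \<noteq> 0"
  shows "0 < x \<bullet> (matrix_inv S *v x)"
proof -
  define y where "y = matrix_inv S *v x"
  have "S *v y = x"
    unfolding y_def matrix_vector_mul_assoc pos_def_matrix_inv(1)[OF pd] by simp
  with \<open>x \<noteq> 0\<close> have "y \<noteq> 0" by auto
  then have "0 < y \<bullet> (S *v y)" using pd unfolding pos_def_def by blast
  with \<open>S *v y = x\<close> show ?thesis unfolding y_def by (simp add: inner_commute)
qed

lemma positive_form_restrict_eq_0: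
  fixes M :: "real^'n^'n"
  assumes pos: "\<And>x. x \<noteq> 0 \<Longrightarrow> 0 < x \<bullet> (M *v x)"
    and form: "(\<Sum>u\<in>C. z u * (\<Sum>w\<in>C. M $ u $ w * z w)) = 0" and "u \<in> C"
  shows "z u = 0"
proof -
  define x :: "real^'n" where "x = (\<chi> u. if u \<in> C then z u else 0)"
  have inner: "(\<Sum>w\<in>UNIV. M $ u $ w * x $ w) = (\<Sum>w\<in>C. M $ u $ w * z w)" for u
    unfolding x_def by (simp add: sum.If_cases if_distrib[of "(*) _"])
  have "x \<bullet> (M *v x) = (\<Sum>u\<in>UNIV. x $ u * (\<Sum>w\<in>UNIV. M $ u $ w * x $ w))"
    by (simp add: inner_vec_def matrix_vector_mult_def)
  also have "\<dots> = (\<Sum>u\<in>C. z u * (\<Sum>w\<in>C. M $ u $ w * z w))"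
    unfolding inner by (simp add: x_def sum.If_cases if_distrib[of "\<lambda>a. a * _"])
  also have "\<dots> = 0" using form .
  finally have "x = 0" using pos by (metis less_irrefl)
  then have "x $ u = 0" by simp
  then show ?thesis using \<open>u \<in> C\<close> unfolding x_def by simp
qed

section \<open>Covariance matrices with a tree as concentration graph\<close>

lemma markov_property:
  fixes S :: "real^'n^'n"
  assumes pd: "pos_def S" and sep: "separates (ci_graph S) k i j"
  shows "S$k$k * S$i$j = S$i$k * S$k$j"
proof (cases "i = k \<or> j = k")
  case True
  then show ?thesis by (auto simp: mult.commute)
next
  case False
  define \<Omega> where "\<Omega> = matrix_inv S"
  define C where "C = {u. (avoiding (ci_graph S) k)\<^sup>*\<^sup>* i u}"
  define z where "z w = S$k$k * S$w$j - S$w$k * S$k$j" for w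
  (* z = S (S_kk e_j - S_kj e_k) vanishes at k and S^-1 z vanishes on C. As every neighbour of C
     lies in C or is k, z restricted to C is in the kernel of the principal submatrix of S^-1 on C,
     which is positive definite. *)
  have "i \<in> C" unfolding C_def by simp
  have "j \<notin> C" using sep unfolding C_def by simp
  have C_avoids_k: "u \<noteq> k" if "u \<in> C" for u
    using that avoiding_rtranclp_avoids[of _ k i u] False unfolding C_def by blast
  have "(\<Sum>w\<in>C. \<Omega>$u$w * z w) = 0" if "u \<in> C" for u
  proof -
    have "\<Omega>$u$w * z w = 0" if "w \<notin> C" for w
    proof (cases "w = k")
      case True
      then show ?thesis unfolding z_def by simp
    next
      case False
      have "(avoiding (ci_graph S) k)\<^sup>*\<^sup>* i u" "\<not> (avoiding (ci_graph S) k)\<^sup>*\<^sup>* i w"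
        using \<open>u \<in> C\<close> \<open>w \<notin> C\<close> unfolding C_def by simp_all
      then have "\<not> avoiding (ci_graph S) k u w" by (meson rtranclp.rtrancl_into_rtrancl)
      then have "\<not> ci_graph S u w"
        using False C_avoids_k[OF \<open>u \<in> C\<close>] unfolding avoiding_def by simp
      moreover have "u \<noteq> w" using \<open>u \<in> C\<close> \<open>w \<notin> C\<close> by blast
      ultimately show ?thesis unfolding ci_graph_def \<Omega>_def by simp
    qed
    then have "(\<Sum>w\<in>C. \<Omega>$u$w * z w) = (\<Sum>w\<in>UNIV. \<Omega>$u$w * z w)"
      by (intro sum.mono_neutral_left) simp_all
    also have "\<dots> = S$k$k * (\<Sum>w\<in>UNIV. \<Omega>$u$w * S$w$j) - S$k$j * (\<Sum>w\<in>UNIV. \<Omega>$u$w * S$w$k)"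
      unfolding z_def right_diff_distrib sum_subtractf sum_distrib_left by (simp add: ac_simps)
    also have "\<dots> = 0"
      using \<open>u \<in> C\<close> \<open>j \<notin> C\<close> C_avoids_k[OF \<open>u \<in> C\<close>]
      unfolding \<Omega>_def matrix_inv_mult_entry[OF pd] by (metis mult_zero_right diff_self)
    finally show ?thesis .
  qed
  then have "(\<Sum>u\<in>C. z u * (\<Sum>w\<in>C. \<Omega>$u$w * z w)) = 0" by simp
  then have "z i = 0"
    using positive_form_restrict_eq_0[OF matrix_inv_form_pos[OF pd]] \<open>i \<in> C\<close>
    unfolding \<Omega>_def by blast
  then show ?thesis unfolding z_def by (simp add: mult.commute)
qed

lemma tree_edge_cov_nonzero:
  fixes S :: "real^'n^'n"
  assumes pd: "pos_def S" and tree: "is_tree (ci_graph S)" and edge: "ci_graph S i j"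
  shows "S$i$j \<noteq> 0"
proof
  assume "S$i$j = 0"
  define \<Omega> where "\<Omega> = matrix_inv S"
  (* In entry (i, j) of S^-1 S = I only the term w = j survives: every other neighbour w of i is
     separated from j by i, so S_ii S_jw = S_ji S_iw = 0. *)
  have "i \<noteq> j" using edge unfolding ci_graph_def by simp
  have vanish: "\<Omega>$i$w * S$w$j = 0" if "w \<noteq> j" for w
  proof (cases "w = i \<or> \<Omega>$i$w = 0")
    case True
    then show ?thesis using \<open>S$i$j = 0\<close> by auto
  next
    case False
    then have "ci_graph S i w" unfolding ci_graph_def \<Omega>_def by auto
    then have "separates (ci_graph S) i j w"
      using tree_neighbours_separated[OF tree edge] \<open>w \<noteq> j\<close> by blast
    then have "S$i$i * S$j$w = S$j$i * S$i$w" by (rule markov_property[OF pd])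
    then have "S$i$i * S$j$w = 0" using \<open>S$i$j = 0\<close> pos_def_sym[OF pd, of j i] by simp
    then show ?thesis using pos_def_diag_pos[OF pd, of i] pos_def_sym[OF pd, of w j] by simp
  qed
  then have "(\<Sum>w\<in>UNIV - {j}. \<Omega>$i$w * S$w$j) = 0" by (intro sum.neutral) blast
  then have "(\<Sum>w\<in>UNIV. \<Omega>$i$w * S$w$j) = \<Omega>$i$j * S$j$j"
    by (subst sum.remove[of _ j]) simp_all
  moreover have "(\<Sum>w\<in>UNIV. \<Omega>$i$w * S$w$j) = 0"
    using matrix_inv_mult_entry[OF pd] \<open>i \<noteq> j\<close> unfolding \<Omega>_def by simp
  ultimately have "\<Omega>$i$j = 0" using pos_def_diag_pos[OF pd, of j] by simp
  with edge show False unfolding ci_graph_def \<Omega>_def by simp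
qed

lemma tree_cov_nonzero:
  fixes S :: "real^'n^'n"
  assumes pd: "pos_def S" and tree: "is_tree (ci_graph S)"
  shows "S$k$x \<noteq> 0"
  using tree
proof (induction k rule: tree_induct_towards[where x = x])
  case root
  show ?case using pos_def_diag_pos[OF pd] by (simp add: less_imp_neq[symmetric])
next
  case (step k p)
  have "separates (ci_graph S) p k x"
    using tree_neighbour_separates[OF tree step.hyps(2,3)] step.hyps(1) by blast
  then have "S$p$p * S$k$x = S$k$p * S$p$x" by (rule markov_property[OF pd])
  moreover have "S$k$p \<noteq> 0" using tree_edge_cov_nonzero[OF pd tree step.hyps(2)] .
  ultimately show ?case using step.IH by auto
qed

lemma tree_cov_ratio_le:
  fixes S :: "real^'n^'n"
  assumes pd: "pos_def S" and tree: "is_tree (ci_graph S)" and "x \<noteq> y"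
  shows "S$x$k * S$k$y / S$x$y \<le> S$k$k"
  using tree
proof (induction k rule: tree_induct_towards[where x = x])
  case root
  show ?case using tree_cov_nonzero[OF pd tree, of x y] by simp
next
  case (step k p)
  have "S$x$y \<noteq> 0" using tree_cov_nonzero[OF pd tree] .
  have "k \<noteq> p" using step.hyps(2) unfolding ci_graph_def by simp
  have "separates (ci_graph S) p k x"
    using tree_neighbour_separates[OF tree step.hyps(2,3)] step.hyps(1) by blast
  then have through_x: "S$p$p * S$k$x = S$k$p * S$p$x" by (rule markov_property[OF pd])
  show ?case
  proof (cases "separates (ci_graph S) k x y")
    case True
    then have "S$k$k * S$x$y = S$x$k * S$k$y" by (rule markov_property[OF pd])
    then have "S$x$k * S$k$y / S$x$y = S$k$k"
      using \<open>S$x$y \<noteq> 0\<close> by (metis nonzero_mult_div_cancel_right)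
    then show ?thesis by simp
  next
    case False
    then have x_y: "(avoiding (ci_graph S) k)\<^sup>*\<^sup>* x y" by simp
    with step.hyps(3) have p_y: "(avoiding (ci_graph S) k)\<^sup>*\<^sup>* p y" by (rule rtranclp_trans)
    have "y \<noteq> k" using avoiding_rtranclp_avoids[OF x_y] step.hyps(1) by blast
    with p_y have "separates (ci_graph S) p k y"
      by (intro tree_neighbour_separates[OF tree step.hyps(2)])
    then have through_y: "S$p$p * S$k$y = S$k$p * S$p$y" by (rule markov_property[OF pd])
    have "S$p$p \<noteq> 0" using pos_def_diag_pos[OF pd, of p] by simp
    then have "S$x$k = S$k$p * S$x$p / S$p$p" "S$k$y = S$k$p * S$p$y / S$p$p"
      using through_x through_y pos_def_sym[OF pd, of x k] pos_def_sym[OF pd, of x p]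
      by (simp_all add: eq_divide_eq mult.commute)
    then have "S$x$k * S$k$y / S$x$y = (S$k$p / S$p$p)^2 * (S$x$p * S$p$y / S$x$y)"
      by (simp add: power2_eq_square)
    also have "\<dots> \<le> (S$k$p / S$p$p)^2 * S$p$p"
      using step.IH by (intro mult_left_mono) simp_all
    also have "\<dots> = (S$k$p)^2 / S$p$p"
      using pos_def_diag_pos[OF pd, of p] by (simp add: power2_eq_square)
    also have "\<dots> < S$k$k"
      using pos_def_off_diag_sq_less[OF pd \<open>k \<noteq> p\<close>] pos_def_diag_pos[OF pd, of p]
      by (simp add: field_simps)
    finally show ?thesis by (rule less_imp_le)
  qed
qed

section \<open>Two tree-structured matrices with the same off-diagonal entries\<close>

lemma diag_le_of_two_neighbours:
  fixes A B :: "real^'n^'n"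
  assumes pd_A: "pos_def A" and tree_A: "is_tree (ci_graph A)"
    and pd_B: "pos_def B" and tree_B: "is_tree (ci_graph B)"
    and off_diag: "\<And>i j. i \<noteq> j \<Longrightarrow> B$i$j = A$i$j"
    and "ci_graph A k p" "ci_graph A k q" "p \<noteq> q"
  shows "A$k$k \<le> B$k$k"
proof -
  have "k \<noteq> p" "k \<noteq> q" using assms(6,7) unfolding ci_graph_def by simp_all
  have "separates (ci_graph A) k p q" using tree_neighbours_separated[OF tree_A assms(6-8)] .
  then have "A$k$k * A$p$q = A$p$k * A$k$q" by (rule markov_property[OF pd_A])
  then have "A$k$k = B$p$k * B$k$q / B$p$q"
    using tree_cov_nonzero[OF pd_A tree_A, of p q] off_diag \<open>p \<noteq> q\<close> \<open>k \<noteq> p\<close> \<open>k \<noteq> q\<close>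
    by (simp add: eq_divide_eq)
  also have "\<dots> \<le> B$k$k" using tree_cov_ratio_le[OF pd_B tree_B \<open>p \<noteq> q\<close>] .
  finally show ?thesis .
qed

lemma leaf_diag_le:
  fixes A B :: "real^'n^'n"
  assumes pd_A: "pos_def A" and tree_A: "is_tree (ci_graph A)" and pd_B: "pos_def B"
    and off_diag: "\<And>i j. i \<noteq> j \<Longrightarrow> B$i$j = A$i$j"
    and leaf: "\<And>w. ci_graph A l w \<Longrightarrow> w = b"
    and sep: "separates (ci_graph B) l x y" and "x \<noteq> l" "y \<noteq> l"
  shows "B$l$l * A$b$b \<le> (A$l$b)^2"
proof -
  have "x \<noteq> y" using sep by auto
  have "A$b$b > 0" using pos_def_diag_pos[OF pd_A] .
  have through_b: "A$l$z = A$l$b * A$b$z / A$b$b" if "z \<noteq> l" for z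
  proof -
    have "separates (ci_graph A) b l z" using leaf_neighbour_separates[OF leaf that] .
    then have "A$b$b * A$l$z = A$l$b * A$b$z" by (rule markov_property[OF pd_A])
    then show ?thesis using \<open>A$b$b > 0\<close> by (simp add: eq_divide_eq mult.commute)
  qed
  have "B$l$l * B$x$y = B$x$l * B$l$y" using markov_property[OF pd_B sep] .
  then have "B$l$l = A$l$x * A$l$y / A$x$y"
    using off_diag \<open>x \<noteq> y\<close> \<open>x \<noteq> l\<close> \<open>y \<noteq> l\<close> tree_cov_nonzero[OF pd_A tree_A, of x y]
      pos_def_sym[OF pd_A, of x l]
    by (simp add: eq_divide_eq)
  also have "\<dots> = (A$l$b / A$b$b)^2 * (A$x$b * A$b$y / A$x$y)"
    unfolding through_b[OF \<open>x \<noteq> l\<close>] through_b[OF \<open>y \<noteq> l\<close>]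
    using pos_def_sym[OF pd_A, of x b] by (simp add: power2_eq_square)
  also have "\<dots> \<le> (A$l$b / A$b$b)^2 * A$b$b"
    using tree_cov_ratio_le[OF pd_A tree_A \<open>x \<noteq> y\<close>] by (intro mult_left_mono) simp_all
  also have "\<dots> = (A$l$b)^2 / A$b$b"
    using \<open>A$b$b > 0\<close> by (simp add: power2_eq_square)
  finally show ?thesis using \<open>A$b$b > 0\<close> by (simp add: le_divide_eq)
qed

lemma split_edge_diag_less:
  fixes S T :: "real^'n^'n"
  assumes pd_S: "pos_def S" and tree_S: "is_tree (ci_graph S)"
    and pd_T: "pos_def T" and tree_T: "is_tree (ci_graph T)"
    and off_diag: "\<And>i j. i \<noteq> j \<Longrightarrow> T$i$j = S$i$j"
    and edge: "ci_graph S u v" and sep: "separates (ci_graph T) k u v" and "k \<noteq> u" "k \<noteq> v"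
  shows "T$k$k < S$k$k"
proof -
  have split: "T$k$k < S$k$k"
    if "separates (ci_graph S) v u k" "separates (ci_graph T) k u v" "u \<noteq> v" "k \<noteq> u" "k \<noteq> v"
    for u v
  proof -
    have "S$v$v * S$u$k = S$u$v * S$v$k" using markov_property[OF pd_S that(1)] .
    moreover have "T$k$k * T$u$v = T$u$k * T$k$v" using markov_property[OF pd_T that(2)] .
    ultimately have "T$k$k * S$u$v * S$v$v = S$u$v * (S$v$k)^2"
      using off_diag that(3-5) pos_def_sym[OF pd_S, of k v]
      by (simp add: power2_eq_square) (metis mult.commute mult.left_commute)
    then have "T$k$k * S$v$v = (S$v$k)^2"
      using tree_cov_nonzero[OF pd_S tree_S, of u v] by (simp add: mult.commute mult.left_commute)
    also have "\<dots> < S$v$v * S$k$k" using pos_def_off_diag_sq_less[OF pd_S] that(5) by simp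
    finally show ?thesis using pos_def_diag_pos[OF pd_S, of v] by (simp add: mult.commute)
  qed
  have "u \<noteq> v" using edge unfolding ci_graph_def by simp
  have "separates (ci_graph T) k v u"
    using sep avoiding_rtranclp_sym[OF tree_symp[OF tree_T]] by blast
  then show ?thesis
    using tree_edge_separates[OF tree_S edge \<open>k \<noteq> u\<close> \<open>k \<noteq> v\<close>] split sep \<open>u \<noteq> v\<close> assms(8,9)
    by blast
qed

locale tree_decomposition_pair =
  fixes A B :: "real^'n^'n" and lmin :: real
  assumes pd_A: "pos_def A" and tree_A: "is_tree (ci_graph A)"
    and pd_B: "pos_def B" and tree_B: "is_tree (ci_graph B)"
    and off_diag: "\<And>i j. i \<noteq> j \<Longrightarrow> B$i$j = A$i$j"
    and min_eig_B: "min_eig_ge B lmin"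
    and leaf_gap: "\<And>l b. is_leaf (ci_graph A) l \<Longrightarrow> ci_graph A l b \<Longrightarrow> B$b$b - A$b$b < lmin"
begin

lemma off_diag_sym: "i \<noteq> j \<Longrightarrow> A$i$j = B$i$j"
  using off_diag by simp

lemma separator_diag_le:
  assumes sep: "separates (ci_graph B) k x y" and "x \<noteq> k" "y \<noteq> k"
  shows "A$k$k \<le> B$k$k"
proof -
  obtain p where kp: "ci_graph A k p" using tree_neighbour_towards[OF tree_A \<open>x \<noteq> k\<close>] by blast
  show ?thesis
  proof (cases "\<exists>q. ci_graph A k q \<and> q \<noteq> p")
    case True
    then obtain q where "ci_graph A k q" "p \<noteq> q" by blast
    then show ?thesis using diag_le_of_two_neighbours[OF pd_A tree_A pd_B tree_B off_diag kp] by blast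
  next
    case False
    then have unique: "\<And>w. ci_graph A k w \<Longrightarrow> w = p" by blast
    then have "{w. ci_graph A k w} = {p}" using kp by blast
    then have "is_leaf (ci_graph A) k" unfolding is_leaf_def by simp
    then have "B$p$p - A$p$p < lmin" using leaf_gap kp by blast
    have "k \<noteq> p" using kp unfolding ci_graph_def by simp
    have "B$k$k * A$p$p \<le> (B$k$p)^2"
      using leaf_diag_le[OF pd_A tree_A pd_B off_diag unique sep \<open>x \<noteq> k\<close> \<open>y \<noteq> k\<close>]
        off_diag[OF \<open>k \<noteq> p\<close>] by simp
    then have "B$p$p - (B$k$p)^2 / B$k$k \<le> B$p$p - A$p$p"
      using pos_def_diag_pos[OF pd_B, of k] by (simp add: le_divide_eq mult.commute)
    moreover have "lmin \<le> B$p$p - (B$k$p)^2 / B$k$k"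
      using schur_complement_ge_min_eig[OF pd_B min_eig_B \<open>k \<noteq> p\<close>] .
    ultimately show ?thesis using \<open>B$p$p - A$p$p < lmin\<close> by linarith
  qed
qed

lemma ci_graph_A_imp_B:
  assumes edge: "ci_graph A u v"
  shows "ci_graph B u v"
proof (rule ccontr)
  assume "\<not> ci_graph B u v"
  moreover have "u \<noteq> v" using edge unfolding ci_graph_def by simp
  ultimately obtain k where "k \<noteq> u" "k \<noteq> v" and sep: "separates (ci_graph B) k u v"
    using tree_nonadjacent_separated[OF tree_B] by blast
  have "B$k$k < A$k$k"
    using split_edge_diag_less[OF pd_A tree_A pd_B tree_B off_diag edge sep \<open>k \<noteq> u\<close> \<open>k \<noteq> v\<close>] .
  moreover have "A$k$k \<le> B$k$k"
    using separator_diag_le[OF sep] \<open>k \<noteq> u\<close> \<open>k \<noteq> v\<close> by simp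
  ultimately show False by simp
qed

lemma ci_graph_B_imp_A:
  assumes edge: "ci_graph B u v"
  shows "ci_graph A u v"
proof (rule ccontr)
  assume "\<not> ci_graph A u v"
  moreover have "u \<noteq> v" using edge unfolding ci_graph_def by simp
  ultimately obtain k where "k \<noteq> u" "k \<noteq> v" and sep: "separates (ci_graph A) k u v"
    using tree_nonadjacent_separated[OF tree_A] by blast
  have "A$k$k < B$k$k"
    using split_edge_diag_less[OF pd_B tree_B pd_A tree_A off_diag_sym edge sep \<open>k \<noteq> u\<close> \<open>k \<noteq> v\<close>] .
  obtain c where kc: "ci_graph B k c" using tree_neighbour_towards[OF tree_B] \<open>k \<noteq> u\<close> by metis
  have "k \<noteq> c" using kc unfolding ci_graph_def by simp
  have unique: "w = c" if "ci_graph B k w" for w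
    using diag_le_of_two_neighbours[OF pd_B tree_B pd_A tree_A off_diag_sym kc that] \<open>A$k$k < B$k$k\<close>
    by (metis not_le)
  have "A$k$k * B$c$c \<le> (A$k$c)^2"
    using leaf_diag_le[OF pd_B tree_B pd_A off_diag_sym unique sep] \<open>k \<noteq> u\<close> \<open>k \<noteq> v\<close>
      off_diag[OF \<open>k \<noteq> c\<close>] by simp
  also have "\<dots> < A$k$k * A$c$c" using pos_def_off_diag_sq_less[OF pd_A \<open>k \<noteq> c\<close>] .
  finally have "B$c$c < A$c$c" using pos_def_diag_pos[OF pd_A, of k] by simp
  obtain y where "y \<in> {u, v}" "y \<noteq> c" using \<open>u \<noteq> v\<close> by blast
  then have "separates (ci_graph B) c k y" "y \<noteq> c"
    using leaf_neighbour_separates[OF unique] \<open>k \<noteq> u\<close> \<open>k \<noteq> v\<close> by auto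
  then have "A$c$c \<le> B$c$c" using separator_diag_le \<open>k \<noteq> c\<close> by blast
  with \<open>B$c$c < A$c$c\<close> show False by simp
qed

theorem ci_graph_eq: "ci_graph B = ci_graph A"
  using ci_graph_A_imp_B ci_graph_B_imp_A by (intro ext iffI)

end

theorem theorem5:
  fixes Sstar Dstar :: "real^'n^'n" and lmin :: real
  assumes "pos_def Sstar"
    and "is_tree (ci_graph Sstar)"
    and "diag_nonneg Dstar"
    and "min_eig_ge Sstar lmin"
    and "\<And>b l. is_leaf (ci_graph Sstar) l \<Longrightarrow> ci_graph Sstar l b \<Longrightarrow> Dstar$b$b < lmin"
  shows "\<forall>S' D' :: real^'n^'n. Sstar + Dstar = S' + D' \<and> pos_def S' \<and> min_eig_ge S' lmin
            \<and> is_tree (ci_graph S') \<and> diag_nonneg D'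
          \<longrightarrow> ci_graph S' = ci_graph Sstar"
proof (intro allI impI)
  fix S' D' :: "real^'n^'n"
  assume "Sstar + Dstar = S' + D' \<and> pos_def S' \<and> min_eig_ge S' lmin
            \<and> is_tree (ci_graph S') \<and> diag_nonneg D'"
  then have sum_eq: "Sstar + Dstar = S' + D'" and "pos_def S'" "min_eig_ge S' lmin"
    "is_tree (ci_graph S')" and D'_diag: "diag_nonneg D'" by auto
  have entry: "Sstar$i$j + Dstar$i$j = S'$i$j + D'$i$j" for i j
    using arg_cong[OF sum_eq, of "\<lambda>M. M$i$j"] by simp
  interpret tree_decomposition_pair Sstar S' lmin
  proof
    show "S'$i$j = Sstar$i$j" if "i \<noteq> j" for i j
      using entry[of i j] that \<open>diag_nonneg Dstar\<close> D'_diag unfolding diag_nonneg_def by simp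
    show "S'$b$b - Sstar$b$b < lmin" if "is_leaf (ci_graph Sstar) l" "ci_graph Sstar l b" for l b
    proof -
      have "0 \<le> D'$b$b" using D'_diag unfolding diag_nonneg_def by blast
      then show ?thesis using entry[of b b] assms(5)[OF that] by linarith
    qed
  qed fact+
  show "ci_graph S' = ci_graph Sstar" by (rule ci_graph_eq)
qed

end
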